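(* Consider a tranca mínima (as defined in the context). If, at some turn, a player of the losing team passes while the two open ends of the board show two different numbers, both different from $0$, then the losing team places at least one tile during the game.
   Context: Domino tiles: the set of tiles consists of the 28 unordered pairs $[a,b]=[b,a]$ with $a,b\in\{0,1,\dots,6\}$; the number of points (pips) of $[a,b]$ is $a+b$. Four players, numbered 1 to 4, play; players 1 and 3 form one team and players 2 and 4 the other. The 28 tiles are dealt, 7 to each player (the initial hands). Players take turns in cyclic order $1,2,3,4,1,\dots$. The starting player places any one of their tiles on the table, forming a line of tiles (the board) with two open ends. On each subsequent turn, the player whose turn it is must, if they hold a tile containing a number equal to the number shown at one of the two open ends, place such a tile at that end (with equal numbers adjacent), the other number of the tile becoming the new open end; if they hold no such tile, they pass. A game ends either when a player places their last tile, or in a tranca (blocked game): a position in which no player holds a tile that can be placed. In a game ending in a tranca, the team whose two players' remaining tiles have the smaller total number of pips wins, and the other team is the losing team. A tranca mínima is a game ending in a tranca in which the total number of pips on the tiles of the board at the end of the game is $42$. *)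

theory Defs
  imports Main
begin

text \<open>Tiles: an unordered pair [a,b] is represented canonically as (a,b) with a \<le> b.\<close>
type_synonym tile = "nat \<times> nat"

definition all_tiles :: "tile set" where
  "all_tiles = {(a, b). a \<le> b \<and> b \<le> 6}"

definition pips :: "tile \<Rightarrow> nat" where
  "pips t = fst t + snd t"

definition matches :: "tile \<Rightarrow> nat \<Rightarrow> bool" where
  "matches t e \<longleftrightarrow> fst t = e \<or> snd t = e"

definition other :: "tile \<Rightarrow> nat \<Rightarrow> nat" where
  "other t e = (if fst t = e then snd t else fst t)"

datatype side = Left | Right

datatype move = Pass | Place tile side

text \<open>A position: hands of the players (indexed 1..4), the two open ends
  (None before the first tile), and the list of tiles on the board.\<close>
type_synonym position = "(nat \<Rightarrow> tile set) \<times> (nat \<times> nat) option \<times> tile list"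

definition hands :: "position \<Rightarrow> nat \<Rightarrow> tile set" where
  "hands P = fst P"

definition ends :: "position \<Rightarrow> (nat \<times> nat) option" where
  "ends P = fst (snd P)"

definition board :: "position \<Rightarrow> tile list" where
  "board P = snd (snd P)"

text \<open>Player whose turn is the k-th turn (k = 0 is the opening move) when player s starts;
  turns follow the cyclic order 1,2,3,4,1,...\<close>
definition player_at :: "nat \<Rightarrow> nat \<Rightarrow> nat" where
  "player_at s k = ((s - 1 + k) mod 4) + 1"

fun apply_move :: "nat \<Rightarrow> move \<Rightarrow> position \<Rightarrow> position" where
  "apply_move p Pass P = P"
| "apply_move p (Place t sd) (h, None, b) = (h(p := h p - {t}), Some (fst t, snd t), t # b)"
| "apply_move p (Place t Left) (h, Some (x, y), b) = (h(p := h p - {t}), Some (other t x, y), t # b)"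
| "apply_move p (Place t Right) (h, Some (x, y), b) = (h(p := h p - {t}), Some (x, other t y), t # b)"

fun pos :: "(nat \<Rightarrow> tile set) \<Rightarrow> nat \<Rightarrow> move list \<Rightarrow> nat \<Rightarrow> position" where
  "pos h0 s ms 0 = (h0, None, [])"
| "pos h0 s ms (Suc k) = apply_move (player_at s k) (ms ! k) (pos h0 s ms k)"

definition legal :: "nat \<Rightarrow> move \<Rightarrow> position \<Rightarrow> bool" where
  "legal p m P =
    (case ends P of
       None \<Rightarrow> (\<exists>t sd. m = Place t sd \<and> t \<in> hands P p)
     | Some (x, y) \<Rightarrow>
         (if (\<exists>t\<in>hands P p. matches t x \<or> matches t y)
          then (\<exists>t\<in>hands P p. (m = Place t Left \<and> matches t x) \<or> (m = Place t Right \<and> matches t y))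
          else m = Pass))"

definition blocked :: "position \<Rightarrow> bool" where
  "blocked P \<longleftrightarrow>
    (\<exists>x y. ends P = Some (x, y) \<and>
       (\<forall>p\<in>{1..4}. \<forall>t\<in>hands P p. \<not> matches t x \<and> \<not> matches t y))"

definition valid_deal :: "(nat \<Rightarrow> tile set) \<Rightarrow> bool" where
  "valid_deal h0 \<longleftrightarrow>
    (\<forall>p\<in>{1..4}. h0 p \<subseteq> all_tiles \<and> card (h0 p) = 7) \<and>
    (\<forall>p\<in>{1..4}. \<forall>q\<in>{1..4}. p \<noteq> q \<longrightarrow> h0 p \<inter> h0 q = {}) \<and>
    (\<Union>p\<in>{1..4}. h0 p) = all_tiles"

definition tranca_game :: "(nat \<Rightarrow> tile set) \<Rightarrow> nat \<Rightarrow> move list \<Rightarrow> bool" where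
  "tranca_game h0 s ms \<longleftrightarrow>
    valid_deal h0 \<and> s \<in> {1..4} \<and>
    (\<forall>k<length ms.
       legal (player_at s k) (ms ! k) (pos h0 s ms k) \<and>
       \<not> blocked (pos h0 s ms k) \<and>
       (\<forall>p\<in>{1..4}. hands (pos h0 s ms k) p \<noteq> {})) \<and>
    blocked (pos h0 s ms (length ms)) \<and>
    (\<forall>p\<in>{1..4}. hands (pos h0 s ms (length ms)) p \<noteq> {})"

definition tranca_minima :: "(nat \<Rightarrow> tile set) \<Rightarrow> nat \<Rightarrow> move list \<Rightarrow> bool" where
  "tranca_minima h0 s ms \<longleftrightarrow>
    tranca_game h0 s ms \<and> sum_list (map pips (board (pos h0 s ms (length ms)))) = 42"

definition team_pips :: "position \<Rightarrow> nat set \<Rightarrow> nat" where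
  "team_pips P T = (\<Sum>p\<in>T. \<Sum>t\<in>hands P p. pips t)"

definition losing_team :: "(nat \<Rightarrow> tile set) \<Rightarrow> nat \<Rightarrow> move list \<Rightarrow> nat set \<Rightarrow> bool" where
  "losing_team h0 s ms T \<longleftrightarrow>
    (let P = pos h0 s ms (length ms) in
      (T = {1, 3} \<and> team_pips P {1, 3} > team_pips P {2, 4}) \<or>
      (T = {2, 4} \<and> team_pips P {2, 4} > team_pips P {1, 3}))"

end

theory Submission
  imports Defs
begin

text \<open>Along the line of tiles every number other than the two open ends is paired with an
  equal neighbour. In a tranca all eight halves showing an open end a are on the board, so both
  ends show a, every number occurs an even number of times on the board, and every other number
  v occurs at least twice (the tile [a,v] is played). A pip total of 42 = 2 (1 + ... + 6) then
  forces a = 0, exactly two occurrences of each of 1, ..., 6 and a board of 10 tiles.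

  If the team T never placed a tile, its 14 tiles stay off the board. The player of T who passes
  on the nonzero ends x, y holds neither number; one of them, e, survives the opponent's move, so
  the partner also passes on e. Then the board and the 7 tiles carrying e, at least
  10 + 7 - 2 = 15 tiles, avoid these 14 of the 28 tiles.\<close>

definition tile_list :: "tile list" where
  "tile_list = [(a, b). b \<leftarrow> [0..<7], a \<leftarrow> [0..<7], a \<le> b]"

lemma all_tiles_eq_set_tile_list: "all_tiles = set tile_list"
  unfolding all_tiles_def tile_list_def by auto

lemma finite_all_tiles [simp]: "finite all_tiles"
  unfolding all_tiles_eq_set_tile_list by simp

lemma card_all_tiles: "card all_tiles = 28"
  unfolding all_tiles_eq_set_tile_list tile_list_def by (simp add: distinct_card upt_rec)

lemma le_6_cases: "(v::nat) \<le> 6 \<Longrightarrow> v \<in> {0, 1, 2, 3, 4, 5, 6}"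
  by auto

definition tiles_with :: "nat \<Rightarrow> tile set" where
  "tiles_with e = {t \<in> all_tiles. matches t e}"

lemma card_tiles_with: "e \<le> 6 \<Longrightarrow> card (tiles_with e) = 7"
  unfolding tiles_with_def all_tiles_eq_set_tile_list set_filter[symmetric]
  by (drule le_6_cases) (auto simp: tile_list_def upt_rec matches_def distinct_card)

definition occ :: "tile \<Rightarrow> nat \<Rightarrow> nat" where
  "occ t v = (if fst t = v then 1 else 0) + (if snd t = v then 1 else 0)"

lemma sum_occ_all_tiles: "v \<le> 6 \<Longrightarrow> (\<Sum>t\<in>all_tiles. occ t v) = 8"
  unfolding all_tiles_eq_set_tile_list
  by (drule le_6_cases) (auto simp: sum.distinct_set_conv_list tile_list_def upt_rec occ_def)

lemma sum_occ_tile: "t \<in> all_tiles \<Longrightarrow> (\<Sum>v\<le>6. occ t v) = 2"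
  unfolding all_tiles_def occ_def by (auto simp: atMost_Suc numeral_eq_Suc le_Suc_eq)

lemma pips_eq_sum_occ: "t \<in> all_tiles \<Longrightarrow> pips t = (\<Sum>v\<le>6. v * occ t v)"
  unfolding all_tiles_def pips_def occ_def by (auto simp: atMost_Suc numeral_eq_Suc le_Suc_eq)

lemma occ_pos_if_matches: "matches t e \<Longrightarrow> 1 \<le> occ t e"
  unfolding matches_def occ_def by auto

lemma occ_if_matches: "matches t x \<Longrightarrow> occ t v = occ (x, other t x) v"
  unfolding matches_def occ_def other_def by auto

lemma sum_pips_eq_sum_occ:
  assumes "A \<subseteq> all_tiles"
  shows "(\<Sum>t\<in>A. pips t) = (\<Sum>v\<le>6. v * (\<Sum>t\<in>A. occ t v))"
proof -
  have "(\<Sum>t\<in>A. pips t) = (\<Sum>t\<in>A. \<Sum>v\<le>6. v * occ t v)"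
    using assms pips_eq_sum_occ by (intro sum.cong) auto
  also have "\<dots> = (\<Sum>v\<le>6. v * (\<Sum>t\<in>A. occ t v))"
    by (subst sum.swap) (simp add: sum_distrib_left)
  finally show ?thesis .
qed

lemma card_eq_sum_occ:
  assumes "A \<subseteq> all_tiles"
  shows "2 * card A = (\<Sum>v\<le>6. \<Sum>t\<in>A. occ t v)"
proof -
  have "(\<Sum>v\<le>6. \<Sum>t\<in>A. occ t v) = (\<Sum>t\<in>A. \<Sum>v\<le>6. occ t v)"
    by (rule sum.swap)
  also have "\<dots> = (\<Sum>t\<in>A. 2)"
    using assms sum_occ_tile by (intro sum.cong) auto
  finally show ?thesis by simp
qed

lemma card_Int_tiles_with_le_sum_occ:
  assumes "finite A"
  shows "card (A \<inter> tiles_with e) \<le> (\<Sum>t\<in>A. occ t e)"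
proof -
  have "card (A \<inter> tiles_with e) = (\<Sum>t\<in>A \<inter> tiles_with e. 1)"
    by simp
  also have "\<dots> \<le> (\<Sum>t\<in>A \<inter> tiles_with e. occ t e)"
    using occ_pos_if_matches by (intro sum_mono) (auto simp: tiles_with_def)
  also have "\<dots> \<le> (\<Sum>t\<in>A. occ t e)"
    using assms by (intro sum_mono2) auto
  finally show ?thesis .
qed

definition board_occ :: "position \<Rightarrow> nat \<Rightarrow> nat" where
  "board_occ P v = (\<Sum>t\<in>set (board P). occ t v)"

definition ends_parity :: "position \<Rightarrow> bool" where
  "ends_parity P \<longleftrightarrow>
    (case ends P of
       None \<Rightarrow> board P = []
     | Some (l, r) \<Rightarrow> l \<le> 6 \<and> r \<le> 6 \<and> (\<forall>v. even (board_occ P v + occ (l, r) v)))"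

definition wf_position :: "(nat \<Rightarrow> tile set) \<Rightarrow> position \<Rightarrow> bool" where
  "wf_position h0 P \<longleftrightarrow>
    distinct (board P) \<and> set (board P) \<subseteq> all_tiles \<and>
    (\<forall>p\<in>{1..4}. hands P p = h0 p - set (board P)) \<and> ends_parity P"

lemma board_apply_move_Place: "board (apply_move p (Place t sd) P) = t # board P"
  by (cases P; cases "fst (snd P)"; cases sd) (auto simp: board_def)

lemma hands_apply_move_Place:
  "hands (apply_move p (Place t sd) P) = (hands P)(p := hands P p - {t})"
  by (cases P; cases "fst (snd P)"; cases sd) (auto simp: hands_def)

lemma ends_apply_move_Place_None:
  "ends P = None \<Longrightarrow> ends (apply_move p (Place t sd) P) = Some t"
  by (cases P) (auto simp: ends_def)

lemma ends_apply_move_Place: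
  assumes "ends P = Some (x, y)"
  shows "ends (apply_move p (Place t Left) P) = Some (other t x, y)"
    and "ends (apply_move p (Place t Right) P) = Some (x, other t y)"
  using assms by (cases P; auto simp: ends_def)+

lemma legal_Place_in_hands: "legal p (Place t sd) P \<Longrightarrow> t \<in> hands P p"
  unfolding legal_def by (auto split: option.splits if_splits)

lemma legal_Place_matches:
  "legal p (Place t sd) P \<Longrightarrow> ends P = Some (x, y) \<Longrightarrow>
    (sd = Left \<and> matches t x) \<or> (sd = Right \<and> matches t y)"
  unfolding legal_def by (auto split: if_splits)

lemma legal_Pass_no_match:
  "legal p Pass P \<Longrightarrow> ends P = Some (x, y) \<Longrightarrow> t \<in> hands P p \<Longrightarrow>
    \<not> matches t x \<and> \<not> matches t y"
  unfolding legal_def by (auto split: if_splits)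

lemma player_at_range: "player_at s k \<in> {1..4}"
  unfolding player_at_def by auto

lemma board_occ_apply_move_Place:
  "t \<notin> set (board P) \<Longrightarrow>
    board_occ (apply_move p (Place t sd) P) v = occ t v + board_occ P v"
  by (simp add: board_occ_def board_apply_move_Place)

lemma ends_parity_apply_move_Place:
  assumes parity: "ends_parity P" and legal: "legal p (Place t sd) P"
    and t: "t \<in> all_tiles" "t \<notin> set (board P)"
  shows "ends_parity (apply_move p (Place t sd) P)"
proof (cases "ends P")
  case None
  then have "board P = []" using parity unfolding ends_parity_def by simp
  then show ?thesis
    using None t ends_apply_move_Place_None[OF None] board_occ_apply_move_Place[OF t(2)]
    unfolding ends_parity_def all_tiles_def by (cases t) (simp add: board_occ_def[of P])
next
  case (Some e)
  then obtain x y where xy: "ends P = Some (x, y)" by (cases e) auto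
  then have old: "x \<le> 6" "y \<le> 6" "\<And>v. even (board_occ P v + occ (x, y) v)"
    using parity unfolding ends_parity_def by auto
  have "other t v \<le> 6" for v using t(1) unfolding all_tiles_def other_def by auto
  then show ?thesis
  proof (cases sd)
    case Left
    then have "matches t x" using legal_Place_matches legal xy by blast
    then have "occ t v = occ (x, other t x) v" for v by (rule occ_if_matches)
    with old \<open>other t x \<le> 6\<close> show ?thesis
      unfolding ends_parity_def Left ends_apply_move_Place(1)[OF xy]
      by (simp add: board_occ_apply_move_Place[OF t(2)]) (simp add: occ_def)
  next
    case Right
    then have "matches t y" using legal_Place_matches legal xy by blast
    then have "occ t v = occ (y, other t y) v" for v by (rule occ_if_matches)
    with old \<open>other t y \<le> 6\<close> show ?thesis
      unfolding ends_parity_def Right ends_apply_move_Place(2)[OF xy]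
      by (simp add: board_occ_apply_move_Place[OF t(2)]) (simp add: occ_def)
  qed
qed

lemma wf_position_apply_move:
  assumes deal: "valid_deal h0" and p: "p \<in> {1..4}"
    and wf: "wf_position h0 P" and legal: "legal p m P"
  shows "wf_position h0 (apply_move p m P)"
proof (cases m)
  case Pass
  then show ?thesis using wf by simp
next
  case (Place t sd)
  have t_hand: "t \<in> h0 p" "t \<notin> set (board P)"
    using legal_Place_in_hands[of p t sd P] legal wf p Place unfolding wf_position_def by auto
  have "t \<in> all_tiles" and "\<forall>q\<in>{1..4}. q \<noteq> p \<longrightarrow> t \<notin> h0 q"
    using deal p t_hand(1) unfolding valid_deal_def by blast+
  moreover have "ends_parity (apply_move p m P)"
    using wf legal t_hand \<open>t \<in> all_tiles\<close> ends_parity_apply_move_Place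
    unfolding Place wf_position_def by blast
  ultimately show ?thesis
    using wf t_hand unfolding Place wf_position_def hands_apply_move_Place board_apply_move_Place
    by auto
qed

lemma tranca_game_turn:
  assumes "tranca_game h0 s ms" and "k < length ms"
  shows "legal (player_at s k) (ms ! k) (pos h0 s ms k)" and "\<not> blocked (pos h0 s ms k)"
  using assms unfolding tranca_game_def by blast+

lemma tranca_game_wf_position:
  assumes game: "tranca_game h0 s ms" and "k \<le> length ms"
  shows "wf_position h0 (pos h0 s ms k)"
  using assms(2)
proof (induction k)
  case 0
  then show ?case by (simp add: wf_position_def ends_parity_def board_def hands_def ends_def)
next
  case (Suc k)
  have "valid_deal h0" using game unfolding tranca_game_def by simp
  with Suc show ?case
    using tranca_game_turn(1)[OF game] wf_position_apply_move player_at_range by simp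
qed

lemma tranca_game_Pass_not_last:
  assumes game: "tranca_game h0 s ms" and k: "k < length ms" and "ms ! k = Pass"
  shows "Suc k < length ms"
proof (rule ccontr)
  assume "\<not> Suc k < length ms"
  then have "length ms = Suc k" using k by simp
  then have "blocked (pos h0 s ms k)"
    using game \<open>ms ! k = Pass\<close> unfolding tranca_game_def by simp
  then show False using tranca_game_turn(2)[OF game k] by contradiction
qed

lemma blocked_end_tiles_on_board:
  assumes deal: "valid_deal h0" and wf: "wf_position h0 P"
    and blocked: "blocked P" and ends: "ends P = Some (a, b)"
  shows "tiles_with a \<subseteq> set (board P)"
proof
  fix t assume t: "t \<in> tiles_with a"
  then obtain p where "p \<in> {1..4}" "t \<in> h0 p"
    using deal unfolding valid_deal_def tiles_with_def by blast
  moreover have "\<forall>p\<in>{1..4}. \<forall>t\<in>hands P p. \<not> matches t a"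
    using blocked ends unfolding blocked_def by auto
  ultimately show "t \<in> set (board P)"
    using wf t unfolding wf_position_def tiles_with_def by auto
qed

lemma blocked_position_board_occ:
  assumes deal: "valid_deal h0" and wf: "wf_position h0 P" and blocked: "blocked P"
  obtains a where "ends P = Some (a, a)" and "a \<le> 6" and "board_occ P a = 8"
    and "\<forall>v\<le>6. 2 \<le> board_occ P v"
proof -
  obtain a b where ends: "ends P = Some (a, b)"
    using blocked unfolding blocked_def by auto
  have a_le_6: "a \<le> 6" and parity: "\<And>v. even (board_occ P v + occ (a, b) v)"
    using wf ends unfolding wf_position_def ends_parity_def by auto
  have on_board: "tiles_with a \<subseteq> set (board P)"
    using deal wf blocked ends by (rule blocked_end_tiles_on_board)
  have "board_occ P a = (\<Sum>t\<in>all_tiles. occ t a)"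
    unfolding board_occ_def
  proof (rule sum.mono_neutral_left)
    show "set (board P) \<subseteq> all_tiles" using wf unfolding wf_position_def by simp
    show "\<forall>t\<in>all_tiles - set (board P). occ t a = 0"
      using on_board unfolding tiles_with_def matches_def occ_def by auto
  qed simp
  then have occ_a: "board_occ P a = 8" using sum_occ_all_tiles a_le_6 by simp
  then have "b = a" using parity[of a] by (auto simp: occ_def split: if_splits)
  have "2 \<le> board_occ P v" if "v \<le> 6" for v
  proof (cases "v = a")
    case True
    then show ?thesis using occ_a by simp
  next
    case False
    let ?t = "(min a v, max a v)"
    have "?t \<in> tiles_with a"
      using that a_le_6 unfolding tiles_with_def all_tiles_def matches_def by auto
    with on_board have "?t \<in> set (board P)" by blast
    then have "occ ?t v \<le> board_occ P v" unfolding board_occ_def by (intro member_le_sum) auto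
    moreover have "occ ?t v \<noteq> 0" by (simp add: occ_def min_def max_def)
    ultimately have "board_occ P v \<noteq> 0" by linarith
    moreover have "even (board_occ P v)"
      using parity[of v] \<open>b = a\<close> False by (simp add: occ_def)
    ultimately show ?thesis by (auto elim: evenE)
  qed
  with ends \<open>b = a\<close> a_le_6 occ_a show ?thesis by (intro that) simp_all
qed

lemma weighted_sum_at_lower_bound:
  fixes n :: "nat \<Rightarrow> nat"
  assumes ge: "\<And>v. v \<le> N \<Longrightarrow> c \<le> n v"
    and sum: "(\<Sum>v\<le>N. v * n v) = (\<Sum>v\<le>N. v * c)"
    and v: "v \<in> {1..N}"
  shows "n v = c"
proof (rule ccontr)
  assume "n v \<noteq> c"
  have "(\<Sum>v\<le>N. v * c) < (\<Sum>v\<le>N. v * n v)"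
  proof (rule sum_strict_mono_ex1)
    show "\<forall>w\<in>{..N}. w * c \<le> w * n w" using ge by simp
    show "\<exists>w\<in>{..N}. w * c < w * n w"
      using v ge[of v] \<open>n v \<noteq> c\<close> by (intro bexI[of _ v]) auto
  qed simp
  then show False using sum by simp
qed

lemma tranca_minima_final_board:
  assumes minima: "tranca_minima h0 s ms"
  defines "P \<equiv> pos h0 s ms (length ms)"
  shows "ends P = Some (0, 0)" and "card (set (board P)) = 10"
    and "\<And>e. e \<in> {1..6} \<Longrightarrow> board_occ P e = 2"
proof -
  have game: "tranca_game h0 s ms" using minima unfolding tranca_minima_def by simp
  then have deal: "valid_deal h0" and blocked: "blocked P"
    unfolding tranca_game_def P_def by auto
  have wf: "wf_position h0 P"
    unfolding P_def using game by (rule tranca_game_wf_position) simp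
  from deal wf blocked obtain a
    where ends: "ends P = Some (a, a)" and "a \<le> 6" and occ_a: "board_occ P a = 8"
    and ge_2: "\<forall>v\<le>6. 2 \<le> board_occ P v"
    by (rule blocked_position_board_occ)
  have board: "set (board P) \<subseteq> all_tiles" "distinct (board P)"
    using wf unfolding wf_position_def by auto
  have "(\<Sum>v\<le>6. v * board_occ P v) = sum_list (map pips (board P))"
    using sum_pips_eq_sum_occ[OF board(1)] board(2)
    by (simp add: board_occ_def sum_list_distinct_conv_sum_set)
  also have "\<dots> = 42"
    using minima unfolding tranca_minima_def P_def by simp
  also have "\<dots> = (\<Sum>v\<le>6. v * 2)"
    by (simp add: atMost_Suc numeral_eq_Suc)
  finally have occ_2: "board_occ P e = 2" if "e \<in> {1..6}" for e
    using weighted_sum_at_lower_bound[where n = "board_occ P"] ge_2 that by blast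
  then show "board_occ P e = 2" if "e \<in> {1..6}" for e
    using that .
  have "a = 0" using occ_2[of a] occ_a \<open>a \<le> 6\<close> by (cases "a = 0") auto
  then show "ends P = Some (0, 0)" using ends by simp
  have "2 * card (set (board P)) = (\<Sum>v\<le>6. board_occ P v)"
    unfolding board_occ_def by (rule card_eq_sum_occ[OF board(1)])
  also have "\<dots> = board_occ P 0 + (\<Sum>v\<in>{1..6}. board_occ P v)"
    by (simp add: atMost_atLeast0 sum.atLeast_Suc_atMost)
  also have "\<dots> = 20"
    using occ_2 occ_a \<open>a = 0\<close> by simp
  finally show "card (set (board P)) = 10" by simp
qed

lemma tranca_minima_card_board_Un_tiles_with:
  assumes minima: "tranca_minima h0 s ms" and e: "e \<in> {1..6}"
  shows "15 \<le> card (set (board (pos h0 s ms (length ms))) \<union> tiles_with e)"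
proof -
  let ?B = "set (board (pos h0 s ms (length ms)))"
  have "card (?B \<inter> tiles_with e) \<le> 2"
    using card_Int_tiles_with_le_sum_occ[of ?B e] tranca_minima_final_board(3)[OF minima e]
    unfolding board_occ_def by simp
  moreover have
    "card ?B + card (tiles_with e) = card (?B \<union> tiles_with e) + card (?B \<inter> tiles_with e)"
    by (rule card_Un_Int) (simp_all add: tiles_with_def)
  ultimately show ?thesis
    using tranca_minima_final_board(2)[OF minima] card_tiles_with[of e] e by simp
qed

lemma tranca_minima_two_hands_hold_tile_with:
  assumes minima: "tranca_minima h0 s ms" and pq: "p \<in> {1..4}" "q \<in> {1..4}" "p \<noteq> q"
    and e: "e \<in> {1..6}"
    and unplayed: "set (board (pos h0 s ms (length ms))) \<inter> (h0 p \<union> h0 q) = {}"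
  shows "\<exists>t \<in> h0 p \<union> h0 q. matches t e"
proof (rule ccontr)
  assume "\<not> ?thesis"
  let ?B = "set (board (pos h0 s ms (length ms)))"
  have game: "tranca_game h0 s ms" using minima unfolding tranca_minima_def by simp
  then have deal: "valid_deal h0" unfolding tranca_game_def by simp
  have "?B \<subseteq> all_tiles"
    using tranca_game_wf_position[OF game] unfolding wf_position_def by simp
  with unplayed \<open>\<not> ?thesis\<close> have "?B \<union> tiles_with e \<subseteq> all_tiles - (h0 p \<union> h0 q)"
    unfolding tiles_with_def by blast
  moreover have "card (all_tiles - (h0 p \<union> h0 q)) = 14"
  proof -
    have hands: "h0 p \<union> h0 q \<subseteq> all_tiles" "card (h0 p) = 7" "card (h0 q) = 7"
      "h0 p \<inter> h0 q = {}"
      using deal pq unfolding valid_deal_def by auto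
    then have "finite (h0 p)" "finite (h0 q)"
      using finite_subset[OF _ finite_all_tiles] by auto
    then have "card (h0 p \<union> h0 q) = 14"
      using hands by (simp add: card_Un_disjoint)
    then show ?thesis
      using hands card_all_tiles \<open>finite (h0 p)\<close> \<open>finite (h0 q)\<close>
      by (simp add: card_Diff_subset)
  qed
  ultimately have "card (?B \<union> tiles_with e) \<le> 14"
    using card_mono[of "all_tiles - (h0 p \<union> h0 q)"] by simp
  then show False using tranca_minima_card_board_Un_tiles_with[OF minima e] by simp
qed

definition passive_team :: "nat \<Rightarrow> move list \<Rightarrow> nat set \<Rightarrow> bool" where
  "passive_team s ms T \<longleftrightarrow> (\<forall>j<length ms. player_at s j \<in> T \<longrightarrow> ms ! j = Pass)"

lemma passive_team_board_disjoint:
  assumes game: "tranca_game h0 s ms" and T_passes: "passive_team s ms T"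
    and T: "T \<subseteq> {1..4}" and r: "r \<in> T" and "k \<le> length ms"
  shows "set (board (pos h0 s ms k)) \<inter> h0 r = {}"
  using \<open>k \<le> length ms\<close>
proof (induction k)
  case 0
  then show ?case by (simp add: board_def)
next
  case (Suc k)
  then have IH: "set (board (pos h0 s ms k)) \<inter> h0 r = {}" and k: "k < length ms" by simp_all
  show ?case
  proof (cases "ms ! k")
    case Pass
    then show ?thesis using IH by simp
  next
    case (Place t sd)
    let ?p = "player_at s k"
    have "?p \<noteq> r" using T_passes k Place r unfolding passive_team_def by auto
    have "t \<in> hands (pos h0 s ms k) ?p"
      using tranca_game_turn(1)[OF game k] Place legal_Place_in_hands by simp
    then have "t \<in> h0 ?p"
      using tranca_game_wf_position[OF game] k player_at_range unfolding wf_position_def by auto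
    moreover have "valid_deal h0" using game unfolding tranca_game_def by simp
    ultimately have "t \<notin> h0 r"
      using \<open>?p \<noteq> r\<close> player_at_range r T unfolding valid_deal_def by blast
    then show ?thesis using IH Place board_apply_move_Place by simp
  qed
qed

lemma passive_team_Pass_no_match:
  assumes game: "tranca_game h0 s ms" and T_passes: "passive_team s ms T" and T: "T \<subseteq> {1..4}"
    and k: "k < length ms" and turn: "player_at s k \<in> T"
    and ends: "ends (pos h0 s ms k) = Some (x, y)" and t: "t \<in> h0 (player_at s k)"
  shows "\<not> matches t x \<and> \<not> matches t y"
proof -
  have "legal (player_at s k) Pass (pos h0 s ms k)"
    using tranca_game_turn(1)[OF game k] T_passes k turn unfolding passive_team_def by simp
  moreover have "hands (pos h0 s ms k) (player_at s k) = h0 (player_at s k) - set (board (pos h0 s ms k))"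
    using tranca_game_wf_position[OF game] k player_at_range unfolding wf_position_def by simp
  then have "t \<in> hands (pos h0 s ms k) (player_at s k)"
    using passive_team_board_disjoint[OF game T_passes T turn less_imp_le[OF k]] t by auto
  ultimately show ?thesis by (rule legal_Pass_no_match[OF _ ends])
qed

lemma apply_move_keeps_an_end:
  assumes "ends P = Some (x, y)"
  obtains x' y' where "ends (apply_move p m P) = Some (x', y')" and "x' = x \<or> y' = y"
proof (cases m)
  case Pass
  then show ?thesis using assms that by simp
next
  case (Place t sd)
  then show ?thesis using assms that ends_apply_move_Place by (cases sd) auto
qed

lemma player_at_Suc_Suc_team:
  assumes "T = {1, 3} \<or> T = {2, 4}" and "player_at s k \<in> T"
  shows "player_at s (Suc (Suc k)) \<in> T - {player_at s k}"
proof -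
  define m where "m = (s - 1 + k) mod 4"
  have "player_at s k = m + 1" unfolding player_at_def m_def ..
  moreover have "player_at s (Suc (Suc k)) = (m + 2) mod 4 + 1"
    unfolding player_at_def m_def mod_add_left_eq by simp
  moreover have "m = 0 \<or> m = 1 \<or> m = 2 \<or> m = 3" unfolding m_def by auto
  ultimately show ?thesis using assms by auto
qed

lemma tranca_minima_nonzero_end_not_final:
  assumes minima: "tranca_minima h0 s ms" and "j \<le> length ms"
    and "ends (pos h0 s ms j) = Some (x, y)" and "x \<noteq> 0 \<or> y \<noteq> 0"
  shows "j < length ms"
proof (rule ccontr)
  assume "\<not> j < length ms"
  then have "j = length ms" using \<open>j \<le> length ms\<close> by simp
  then show False using assms(3,4) tranca_minima_final_board(1)[OF minima] by simp
qed

lemma passive_team_partners_miss_end: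
  assumes minima: "tranca_minima h0 s ms" and T_passes: "passive_team s ms T"
    and team: "T = {1, 3} \<or> T = {2, 4}" and k: "k < length ms" and turn: "player_at s k \<in> T"
    and ends: "ends (pos h0 s ms k) = Some (x, y)" and "x \<noteq> 0" and "y \<noteq> 0"
  obtains e where "e \<in> {1..6}"
    and "\<forall>t \<in> h0 (player_at s k) \<union> h0 (player_at s (Suc (Suc k))). \<not> matches t e"
proof -
  have game: "tranca_game h0 s ms" using minima unfolding tranca_minima_def by simp
  have T: "T \<subseteq> {1..4}" using team by auto
  have "ms ! k = Pass" using T_passes k turn unfolding passive_team_def by simp
  then have "Suc k < length ms" using tranca_game_Pass_not_last[OF game k] by simp
  have "pos h0 s ms (Suc (Suc k)) = apply_move (player_at s (Suc k)) (ms ! Suc k) (pos h0 s ms k)"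
    using \<open>ms ! k = Pass\<close> by simp
  then obtain x' y' where ends': "ends (pos h0 s ms (Suc (Suc k))) = Some (x', y')"
    and "x' = x \<or> y' = y"
    using apply_move_keeps_an_end[OF ends] by metis
  define e where "e = (if x' = x then x else y)"
  have "wf_position h0 (pos h0 s ms k)" using tranca_game_wf_position[OF game] k by simp
  then have "x \<le> 6" "y \<le> 6" using ends unfolding wf_position_def ends_parity_def by auto
  then have e: "e \<in> {1..6}" "e \<in> {x, y}" "e \<in> {x', y'}"
    using \<open>x \<noteq> 0\<close> \<open>y \<noteq> 0\<close> \<open>x' = x \<or> y' = y\<close> unfolding e_def by auto
  then have "x' \<noteq> 0 \<or> y' \<noteq> 0" by auto
  with \<open>Suc k < length ms\<close> have "Suc (Suc k) < length ms"
    using tranca_minima_nonzero_end_not_final[OF minima _ ends'] by simp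
  have "\<not> matches t e" if "t \<in> h0 (player_at s k)" for t
    using passive_team_Pass_no_match[OF game T_passes T k turn ends that] e(2) by auto
  moreover have "\<not> matches t e" if "t \<in> h0 (player_at s (Suc (Suc k)))" for t
    using passive_team_Pass_no_match[OF game T_passes T \<open>Suc (Suc k) < length ms\<close> _ ends' that]
      player_at_Suc_Suc_team[OF team turn] e(3) by auto
  ultimately show ?thesis using that e(1) by blast
qed

theorem mainTheorem6:
  fixes h0 :: "nat \<Rightarrow> tile set" and s :: nat and ms :: "move list"
    and T :: "nat set" and k x y :: nat
  assumes "tranca_minima h0 s ms"
    and "losing_team h0 s ms T"
    and "k < length ms"
    and "player_at s k \<in> T"
    and "ms ! k = Pass"
    and "ends (pos h0 s ms k) = Some (x, y)"
    and "x \<noteq> y" and "x \<noteq> 0" and "y \<noteq> 0"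
  shows "\<exists>j<length ms. player_at s j \<in> T \<and> (\<exists>t sd. ms ! j = Place t sd)"
proof (rule ccontr)
  assume "\<not> ?thesis"
  then have T_passes: "passive_team s ms T"
    unfolding passive_team_def by (metis move.exhaust)
  have game: "tranca_game h0 s ms" using assms(1) unfolding tranca_minima_def by simp
  have team: "T = {1, 3} \<or> T = {2, 4}" using assms(2) unfolding losing_team_def Let_def by auto
  then have T: "T \<subseteq> {1..4}" by auto
  define p q where "p = player_at s k" and "q = player_at s (Suc (Suc k))"
  have pq: "p \<in> T" "q \<in> T" "p \<noteq> q"
    using player_at_Suc_Suc_team[OF team assms(4)] assms(4) p_def q_def by auto
  obtain e where "e \<in> {1..6}" and "\<forall>t \<in> h0 p \<union> h0 q. \<not> matches t e"
    using passive_team_partners_miss_end[OF assms(1) T_passes team assms(3,4,6,8,9)] p_def q_def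
    by blast
  moreover have "set (board (pos h0 s ms (length ms))) \<inter> (h0 p \<union> h0 q) = {}"
    using passive_team_board_disjoint[OF game T_passes T _ order_refl] pq by blast
  ultimately show False
    using tranca_minima_two_hands_hold_tile_with[OF assms(1)] pq T by blast
qed

end
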